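(* Let $F_k$ denote the free $k$-algebra on two generators of degree one. (1) If $k$ has characteristic not $2$ and $\sqrt{-1}\in k$, then $F_k$ is a quotient of $A_k$ by a graded ideal. (2) $F_{\mathbb R}$ is not a quotient of $A_{\mathbb R}$ by a graded ideal.
   Context: For a field $k$, $A_k=k\langle x_1,\dots,x_7\rangle/(r_1,\dots,r_7)$, graded by $\deg x_i=1$, with $r_1=[x_2,x_3]+[x_4,x_5]+[x_6,x_7]$, $r_2=[x_3,x_1]+[x_4,x_6]+[x_7,x_5]$, $r_3=[x_1,x_2]+[x_6,x_5]+[x_7,x_4]$, $r_4=[x_5,x_1]+[x_3,x_7]+[x_6,x_2]$, $r_5=[x_1,x_4]+[x_2,x_7]+[x_3,x_6]$, $r_6=[x_7,x_1]+[x_5,x_3]+[x_2,x_4]$, $r_7=[x_1,x_6]+[x_4,x_3]+[x_5,x_2]$. *)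

theory Defs
  imports Complex_Main "HOL-Library.Poly_Mapping"
begin

text \<open>The free (noncommutative) associative k-algebra on generators of type 'g:
  finitely supported k-valued functions on words ('g list), with multiplication
  given by concatenation of words. All generators have degree one, so the degree
  of a word is its length.\<close>

type_synonym ('g, 'k) freealg = "'g list \<Rightarrow>\<^sub>0 'k"

definition fone :: "('g, 'k::field) freealg" where
  "fone = Poly_Mapping.single [] 1"

definition fgen :: "'g \<Rightarrow> ('g, 'k::field) freealg" where
  "fgen g = Poly_Mapping.single [g] 1"

definition fmul :: "('g, 'k::field) freealg \<Rightarrow> ('g, 'k) freealg \<Rightarrow> ('g, 'k) freealg" where
  "fmul p q = (\<Sum>u\<in>Poly_Mapping.keys p. \<Sum>v\<in>Poly_Mapping.keys q.
      Poly_Mapping.single (u @ v) (Poly_Mapping.lookup p u * Poly_Mapping.lookup q v))"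

definition fsmul :: "'k::field \<Rightarrow> ('g, 'k) freealg \<Rightarrow> ('g, 'k) freealg" where
  "fsmul c p = Poly_Mapping.map (\<lambda>a. c * a) p"

definition fcomm :: "('g, 'k::field) freealg \<Rightarrow> ('g, 'k) freealg \<Rightarrow> ('g, 'k) freealg" where
  "fcomm a b = fmul a b - fmul b a"

definition wordval :: "('g \<Rightarrow> ('h, 'k::field) freealg) \<Rightarrow> 'g list \<Rightarrow> ('h, 'k) freealg" where
  "wordval \<phi> w = foldr (\<lambda>g acc. fmul (\<phi> g) acc) w fone"

definition feval :: "('g \<Rightarrow> ('h, 'k::field) freealg) \<Rightarrow> ('g, 'k) freealg \<Rightarrow> ('h, 'k) freealg" where
  "feval \<phi> p = (\<Sum>w\<in>Poly_Mapping.keys p. fsmul (Poly_Mapping.lookup p w) (wordval \<phi> w))"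

definition relA :: "nat \<Rightarrow> (nat, 'k::field) freealg" where
  "relA i = (let x = fgen in
     if i = 1 then fcomm (x 2) (x 3) + fcomm (x 4) (x 5) + fcomm (x 6) (x 7)
     else if i = 2 then fcomm (x 3) (x 1) + fcomm (x 4) (x 6) + fcomm (x 7) (x 5)
     else if i = 3 then fcomm (x 1) (x 2) + fcomm (x 6) (x 5) + fcomm (x 7) (x 4)
     else if i = 4 then fcomm (x 5) (x 1) + fcomm (x 3) (x 7) + fcomm (x 6) (x 2)
     else if i = 5 then fcomm (x 1) (x 4) + fcomm (x 2) (x 7) + fcomm (x 3) (x 6)
     else if i = 6 then fcomm (x 7) (x 1) + fcomm (x 5) (x 3) + fcomm (x 2) (x 4)
     else if i = 7 then fcomm (x 1) (x 6) + fcomm (x 4) (x 3) + fcomm (x 5) (x 2)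
     else 0)"

text \<open>F_k is a quotient of A_k by a graded ideal iff there is a surjective graded algebra
  homomorphism A_k \<rightarrow> F_k, i.e. an assignment phi of the generators x_1..x_7 to
  degree-one elements of F_k = k<y_1,y_2> (generators indexed by bool) that kills all
  relations r_i and whose induced homomorphism k<x_1..x_7> \<rightarrow> F_k is onto.\<close>

definition graded_surj_A_to_F :: "(nat \<Rightarrow> (bool, 'k::field) freealg) \<Rightarrow> bool" where
  "graded_surj_A_to_F \<phi> \<longleftrightarrow>
     (\<forall>i\<in>{1..7}. \<forall>w\<in>Poly_Mapping.keys (\<phi> i). length w = 1) \<and>
     (\<forall>i\<in>{1..7}. feval \<phi> (relA i) = 0) \<and>
     (\<forall>q :: (bool, 'k) freealg. \<exists>p :: (nat, 'k) freealg.
        (\<forall>w\<in>Poly_Mapping.keys p. set w \<subseteq> {1..7}) \<and> feval \<phi> p = q)"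

definition F_graded_quotient_of_A :: "'k::field itself \<Rightarrow> bool" where
  "F_graded_quotient_of_A _ \<longleftrightarrow> (\<exists>\<phi> :: nat \<Rightarrow> (bool, 'k) freealg. graded_surj_A_to_F \<phi>)"

end

theory Submission imports Defs begin

text \<open>
  A graded surjection \<open>A\<^sub>k \<rightarrow> F\<^sub>k\<close> sends each \<open>x\<^sub>j\<close> to a linear form \<open>s\<^sub>j y\<^sub>1 + t\<^sub>j y\<^sub>2\<close>, and then
  \<open>[x\<^sub>j, x\<^sub>k] \<mapsto> (s\<^sub>j t\<^sub>k - t\<^sub>j s\<^sub>k) [y\<^sub>1, y\<^sub>2]\<close>. Hence the relations \<open>r\<^sub>i\<close> are killed exactly when
  the seven-dimensional cross product \<open>s \<times> t\<close> (whose components are the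
  combinations of \<open>2 \<times> 2\<close> minors read off from the \<open>r\<^sub>i\<close>) vanishes.
  If \<open>i\<^sup>2 = -1\<close>, the choice \<open>x\<^sub>1 \<mapsto> y\<^sub>1, x\<^sub>7 \<mapsto> i y\<^sub>1, x\<^sub>2 \<mapsto> y\<^sub>2, x\<^sub>4 \<mapsto> i y\<^sub>2\<close> (others \<open>\<mapsto> 0\<close>)
  does this and is onto. Over \<open>\<real>\<close>, the identity \<open>|s \<times> t|\<^sup>2 = |s|\<^sup>2|t|\<^sup>2 - (s\<cdot>t)\<^sup>2\<close> turns
  \<open>s \<times> t = 0\<close> into the equality case of Cauchy-Schwarz, so \<open>s\<close> and \<open>t\<close> are dependent and
  the degree-one part of the image is at most one-dimensional.
\<close>

lemma lookup_fsmul [simp]: "Poly_Mapping.lookup (fsmul c p) w = c * Poly_Mapping.lookup p w"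
  unfolding fsmul_def by (simp add: map.rep_eq when_def)

lemma fsmul_zero [simp]: "fsmul 0 p = 0"
  by (rule poly_mapping_eqI) simp

lemma fsmul_one [simp]: "fsmul 1 p = p"
  by (rule poly_mapping_eqI) simp

lemma fsmul_add_left: "fsmul (a + b) p = fsmul a p + fsmul b p"
  by (rule poly_mapping_eqI) (simp add: lookup_add algebra_simps)

lemma fsmul_uminus_left: "fsmul (- a) p = - fsmul a p"
  by (rule poly_mapping_eqI) simp

lemma fsmul_single_one: "fsmul c (Poly_Mapping.single w 1) = Poly_Mapping.single w c"
  by (rule poly_mapping_eqI) (simp add: lookup_single when_def)

lemma sum_single_lookup:
  "(\<Sum>w\<in>Poly_Mapping.keys p. Poly_Mapping.single w (Poly_Mapping.lookup p w)) = p"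
proof (rule poly_mapping_eqI)
  fix u
  have "(\<Sum>w\<in>Poly_Mapping.keys p. Poly_Mapping.lookup (Poly_Mapping.single w (Poly_Mapping.lookup p w)) u)
      = (\<Sum>w\<in>Poly_Mapping.keys p. if w = u then Poly_Mapping.lookup p w else 0)"
    by (rule sum.cong) (auto simp: lookup_single when_def)
  also have "\<dots> = Poly_Mapping.lookup p u"
    by (simp add: in_keys_iff)
  finally show "Poly_Mapping.lookup (\<Sum>w\<in>Poly_Mapping.keys p. Poly_Mapping.single w (Poly_Mapping.lookup p w)) u
      = Poly_Mapping.lookup p u"
    by (simp add: lookup_sum)
qed

lemma feval_eq_sum_superset:
  assumes "finite S" "Poly_Mapping.keys p \<subseteq> S"
  shows "feval \<phi> p = (\<Sum>w\<in>S. fsmul (Poly_Mapping.lookup p w) (wordval \<phi> w))"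
  unfolding feval_def
  by (rule sum.mono_neutral_left) (use assms in \<open>auto simp: in_keys_iff\<close>)

lemma feval_zero [simp]: "feval \<phi> 0 = 0"
  by (simp add: feval_def)

lemma feval_add: "feval \<phi> (p + q) = feval \<phi> p + feval \<phi> q"
proof -
  let ?S = "Poly_Mapping.keys p \<union> Poly_Mapping.keys q"
  have "feval \<phi> (p + q) = (\<Sum>w\<in>?S. fsmul (Poly_Mapping.lookup (p + q) w) (wordval \<phi> w))"
    by (rule feval_eq_sum_superset) (simp_all add: keys_add)
  also have "\<dots> = (\<Sum>w\<in>?S. fsmul (Poly_Mapping.lookup p w) (wordval \<phi> w))
                + (\<Sum>w\<in>?S. fsmul (Poly_Mapping.lookup q w) (wordval \<phi> w))"
    by (simp add: lookup_add fsmul_add_left sum.distrib)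
  also have "\<dots> = feval \<phi> p + feval \<phi> q"
    by (simp add: feval_eq_sum_superset[of ?S])
  finally show ?thesis .
qed

lemma feval_uminus: "feval \<phi> (- p) = - feval \<phi> p"
proof -
  have "feval \<phi> (- p) = (\<Sum>w\<in>Poly_Mapping.keys p. fsmul (Poly_Mapping.lookup (- p) w) (wordval \<phi> w))"
    by (rule feval_eq_sum_superset) auto
  then show ?thesis
    by (simp add: fsmul_uminus_left sum_negf feval_def)
qed

lemma feval_diff: "feval \<phi> (p - q) = feval \<phi> p - feval \<phi> q"
  using feval_add[of \<phi> p "- q"] feval_uminus[of \<phi> q] by simp

lemma feval_sum: "finite A \<Longrightarrow> feval \<phi> (\<Sum>a\<in>A. f a) = (\<Sum>a\<in>A. feval \<phi> (f a))"
  by (induction A rule: finite_induct) (simp_all add: feval_add)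

lemma feval_single: "feval \<phi> (Poly_Mapping.single w c) = fsmul c (wordval \<phi> w)"
  by (subst feval_eq_sum_superset[of "{w}"]) auto

lemma wordval_Nil [simp]: "wordval \<phi> [] = fone"
  by (simp add: wordval_def)

lemma wordval_Cons [simp]: "wordval \<phi> (g # w) = fmul (\<phi> g) (wordval \<phi> w)"
  by (simp add: wordval_def)

lemma fmul_eq_sum_superset:
  assumes "finite U" "Poly_Mapping.keys p \<subseteq> U" "finite V" "Poly_Mapping.keys q \<subseteq> V"
  shows "fmul p q = (\<Sum>u\<in>U. \<Sum>v\<in>V.
           Poly_Mapping.single (u @ v) (Poly_Mapping.lookup p u * Poly_Mapping.lookup q v))"
proof -
  have "fmul p q = (\<Sum>u\<in>U. \<Sum>v\<in>Poly_Mapping.keys q.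
           Poly_Mapping.single (u @ v) (Poly_Mapping.lookup p u * Poly_Mapping.lookup q v))"
    unfolding fmul_def
    by (rule sum.mono_neutral_left) (use assms in \<open>auto simp: in_keys_iff\<close>)
  also have "\<dots> = (\<Sum>u\<in>U. \<Sum>v\<in>V.
           Poly_Mapping.single (u @ v) (Poly_Mapping.lookup p u * Poly_Mapping.lookup q v))"
    by (rule sum.cong[OF refl], rule sum.mono_neutral_left) (use assms in \<open>auto simp: in_keys_iff\<close>)
  finally show ?thesis .
qed

lemma fmul_single:
  "fmul (Poly_Mapping.single u c) (Poly_Mapping.single v d) = Poly_Mapping.single (u @ v) (c * d)"
  by (subst fmul_eq_sum_superset[of "{u}" _ "{v}"]) auto

lemma fmul_fone: "fmul p fone = p"
  by (subst fmul_eq_sum_superset[of "Poly_Mapping.keys p" _ "{[]}"])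
     (auto simp: fone_def sum_single_lookup)

lemma keys_fmul:
  "Poly_Mapping.keys (fmul p q)
     \<subseteq> {u @ v | u v. u \<in> Poly_Mapping.keys p \<and> v \<in> Poly_Mapping.keys q}"
proof
  fix x assume "x \<in> Poly_Mapping.keys (fmul p q)"
  then obtain u where u: "u \<in> Poly_Mapping.keys p" and "x \<in> Poly_Mapping.keys (\<Sum>v\<in>Poly_Mapping.keys q.
      Poly_Mapping.single (u @ v) (Poly_Mapping.lookup p u * Poly_Mapping.lookup q v))"
    unfolding fmul_def by (blast dest: subsetD[OF keys_sum])
  then obtain v where v: "v \<in> Poly_Mapping.keys q" and "x \<in> Poly_Mapping.keys
      (Poly_Mapping.single (u @ v) (Poly_Mapping.lookup p u * Poly_Mapping.lookup q v))"
    by (blast dest: subsetD[OF keys_sum])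
  then have "x = u @ v"
    by (simp split: if_splits)
  with u v show "x \<in> {u @ v | u v. u \<in> Poly_Mapping.keys p \<and> v \<in> Poly_Mapping.keys q}"
    by blast
qed

lemma feval_fcomm_fgen: "feval \<phi> (fcomm (fgen j) (fgen k)) = fcomm (\<phi> j) (\<phi> k)"
proof -
  have gens: "fcomm (fgen j) (fgen k) = Poly_Mapping.single [j, k] 1 - Poly_Mapping.single [k, j] 1"
    by (simp add: fcomm_def fgen_def fmul_single)
  show ?thesis
    unfolding gens by (simp add: feval_diff feval_single fmul_fone fcomm_def)
qed

lemma keys_wordval_length:
  assumes "\<forall>g\<in>set w. \<forall>u\<in>Poly_Mapping.keys (\<phi> g). length u = 1"
  shows "Poly_Mapping.keys (wordval \<phi> w) \<subseteq> {u. length u = length w}"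
  using assms
proof (induction w)
  case Nil
  then show ?case by (simp add: fone_def)
next
  case (Cons g w)
  then show ?case
    using keys_fmul[of "\<phi> g" "wordval \<phi> w"] by fastforce
qed

lemma degree_one_eq_linear_form:
  fixes q :: "(bool, 'k::field) freealg"
  assumes "\<forall>u\<in>Poly_Mapping.keys q. length u = 1"
  shows "q = Poly_Mapping.single [False] (Poly_Mapping.lookup q [False])
           + Poly_Mapping.single [True] (Poly_Mapping.lookup q [True])"
proof (rule poly_mapping_eqI)
  fix u :: "bool list"
  show "Poly_Mapping.lookup q u = Poly_Mapping.lookup (Poly_Mapping.single [False] (Poly_Mapping.lookup q [False])
           + Poly_Mapping.single [True] (Poly_Mapping.lookup q [True])) u"
  proof (cases "u \<in> {[False], [True]}")
    case True
    then show ?thesis by (auto simp: lookup_add lookup_single)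
  next
    case False
    have "u \<notin> Poly_Mapping.keys q"
    proof
      assume "u \<in> Poly_Mapping.keys q"
      with assms obtain b where "u = [b]"
        by (metis length_0_conv length_Suc_conv One_nat_def)
      with False show False by (cases b) auto
    qed
    with False show ?thesis
      by (auto simp: lookup_add lookup_single in_keys_iff when_def)
  qed
qed

lemma degree_one_functional_feval:
  fixes \<phi> :: "'g \<Rightarrow> (bool, 'k::field) freealg"
  assumes deg: "\<forall>g\<in>G. \<forall>u\<in>Poly_Mapping.keys (\<phi> g). length u = 1"
    and kill: "\<forall>g\<in>G. A * Poly_Mapping.lookup (\<phi> g) [False] + B * Poly_Mapping.lookup (\<phi> g) [True] = 0"
    and letters: "\<forall>w\<in>Poly_Mapping.keys p. set w \<subseteq> G"
  shows "A * Poly_Mapping.lookup (feval \<phi> p) [False] + B * Poly_Mapping.lookup (feval \<phi> p) [True] = 0"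
proof -
  define L where "L q = A * Poly_Mapping.lookup q [False] + B * Poly_Mapping.lookup q [True]"
    for q :: "(bool, 'k) freealg"
  have L_wordval: "L (wordval \<phi> w) = 0" if "set w \<subseteq> G" for w
  proof (cases "length w = 1")
    case True
    then obtain g where "w = [g]" by (metis length_0_conv length_Suc_conv One_nat_def)
    with that kill show ?thesis by (simp add: L_def fmul_fone)
  next
    case False
    have "Poly_Mapping.keys (wordval \<phi> w) \<subseteq> {u. length u = length w}"
      using that deg by (intro keys_wordval_length) blast
    with False have "[False] \<notin> Poly_Mapping.keys (wordval \<phi> w)" "[True] \<notin> Poly_Mapping.keys (wordval \<phi> w)"
      by auto
    then show ?thesis by (simp add: L_def in_keys_iff)
  qed
  have "L (feval \<phi> p) = (\<Sum>w\<in>Poly_Mapping.keys p. Poly_Mapping.lookup p w * L (wordval \<phi> w))"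
    by (simp add: L_def feval_def lookup_sum sum_distrib_left sum.distrib algebra_simps)
  also have "\<dots> = 0"
    using L_wordval letters by simp
  finally show ?thesis by (simp add: L_def)
qed

lemma feval_onto_if_hits_generators:
  assumes "\<forall>b. \<phi> (\<sigma> b) = fgen b"
  shows "\<exists>p. (\<forall>w\<in>Poly_Mapping.keys p. set w \<subseteq> range \<sigma>) \<and> feval \<phi> p = q"
proof -
  define p where
    "p = (\<Sum>w\<in>Poly_Mapping.keys q. Poly_Mapping.single (map \<sigma> w) (Poly_Mapping.lookup q w))"
  have wordval_map: "wordval \<phi> (map \<sigma> w) = Poly_Mapping.single w 1" for w
    by (induction w) (simp_all add: assms fone_def fgen_def fmul_single)
  have "\<forall>w\<in>Poly_Mapping.keys p. set w \<subseteq> range \<sigma>"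
  proof
    fix w assume "w \<in> Poly_Mapping.keys p"
    then have "w \<in> (\<Union>u\<in>Poly_Mapping.keys q.
        Poly_Mapping.keys (Poly_Mapping.single (map \<sigma> u) (Poly_Mapping.lookup q u)))"
      unfolding p_def by (rule subsetD[OF keys_sum])
    then show "set w \<subseteq> range \<sigma>" by (auto split: if_splits)
  qed
  moreover have "feval \<phi> p = q"
    unfolding p_def
    by (simp add: feval_sum feval_single wordval_map fsmul_single_one sum_single_lookup)
  ultimately show ?thesis by blast
qed

definition linear_subst :: "('a \<Rightarrow> 'k::field) \<Rightarrow> ('a \<Rightarrow> 'k) \<Rightarrow> 'a \<Rightarrow> (bool, 'k) freealg" where
  "linear_subst s t j = Poly_Mapping.single [False] (s j) + Poly_Mapping.single [True] (t j)"

definition minor :: "('a \<Rightarrow> 'k::comm_ring_1) \<Rightarrow> ('a \<Rightarrow> 'k) \<Rightarrow> 'a \<Rightarrow> 'a \<Rightarrow> 'k" where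
  "minor s t j k = s j * t k - t j * s k"

definition cross7 :: "(nat \<Rightarrow> 'k::comm_ring_1) \<Rightarrow> (nat \<Rightarrow> 'k) \<Rightarrow> nat \<Rightarrow> 'k" where
  "cross7 s t i = (let D = minor s t in
     if i = 1 then D 2 3 + D 4 5 + D 6 7
     else if i = 2 then D 3 1 + D 4 6 + D 7 5
     else if i = 3 then D 1 2 + D 6 5 + D 7 4
     else if i = 4 then D 5 1 + D 3 7 + D 6 2
     else if i = 5 then D 1 4 + D 2 7 + D 3 6
     else if i = 6 then D 7 1 + D 5 3 + D 2 4
     else D 1 6 + D 4 3 + D 5 2)"

lemma keys_linear_subst: "Poly_Mapping.keys (linear_subst s t j) \<subseteq> {[False], [True]}"
  unfolding linear_subst_def by (rule order.trans[OF keys_add]) auto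

lemma fmul_linear_subst:
  "fmul (linear_subst s t j) (linear_subst s t k)
     = Poly_Mapping.single [False, False] (s j * s k) + Poly_Mapping.single [False, True] (s j * t k)
     + Poly_Mapping.single [True, False] (t j * s k) + Poly_Mapping.single [True, True] (t j * t k)"
  by (subst fmul_eq_sum_superset[OF _ keys_linear_subst _ keys_linear_subst])
     (simp_all add: linear_subst_def lookup_add lookup_single when_def add_ac)

lemma fcomm_linear_subst:
  "fcomm (linear_subst s t j) (linear_subst s t k)
     = fsmul (minor s t j k) (fcomm (fgen False) (fgen True))"
  unfolding fcomm_def fmul_linear_subst
  by (rule poly_mapping_eqI)
     (simp add: fgen_def fmul_single lookup_add lookup_minus lookup_single when_def minor_def)

lemma feval_relA_linear_subst:
  assumes "\<forall>j\<in>{1..7}. \<phi> j = linear_subst s t j" and "i \<in> {1..7}"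
  shows "feval \<phi> (relA i) = fsmul (cross7 s t i) (fcomm (fgen False) (fgen True))"
proof -
  have "i = 1 \<or> i = 2 \<or> i = 3 \<or> i = 4 \<or> i = 5 \<or> i = 6 \<or> i = 7"
    using assms(2) by auto
  then show ?thesis
    by (elim disjE) (simp_all add: relA_def cross7_def Let_def feval_add feval_fcomm_fgen assms(1)
        fcomm_linear_subst fsmul_add_left)
qed

lemma fsmul_fcomm_fgen_eq_zero_iff: "fsmul c (fcomm (fgen False) (fgen True)) = 0 \<longleftrightarrow> c = 0"
proof
  assume "fsmul c (fcomm (fgen False) (fgen True)) = 0"
  then have "Poly_Mapping.lookup (fsmul c (fcomm (fgen False) (fgen True))) [False, True] = 0"
    by simp
  then show "c = 0"
    by (simp add: fcomm_def fgen_def fmul_single lookup_minus lookup_single)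
qed simp

lemma sum_cross7_squares:
  fixes s t :: "nat \<Rightarrow> 'k::comm_ring_1"
  shows "(\<Sum>i=1..7. (cross7 s t i)\<^sup>2)
       = (\<Sum>j=1..7. (s j)\<^sup>2) * (\<Sum>j=1..7. (t j)\<^sup>2) - (\<Sum>j=1..7. s j * t j)\<^sup>2"
proof -
  have seven: "{1..7::nat} = {1, 2, 3, 4, 5, 6, 7}" by auto
  show ?thesis
    unfolding seven
    by (simp add: cross7_def minor_def Let_def power2_eq_square algebra_simps)
qed

text \<open>Only the minors at \<open>{1,2}, {1,4}, {7,2}, {7,4}\<close> are nonzero; they cancel in pairs in
  \<open>r\<^sub>3\<close> and \<open>r\<^sub>5\<close> because \<open>i\<^sup>2 = -1\<close>.\<close>

lemma cross7_sqrt_minus_one_witness: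
  fixes i :: "'k::comm_ring_1"
  assumes "i * i = -1"
  shows "cross7 (\<lambda>j. if j = 1 then 1 else if j = 7 then i else 0)
                (\<lambda>j. if j = 2 then 1 else if j = 4 then i else 0) n = 0"
  by (simp add: cross7_def minor_def Let_def assms)

lemma F_graded_quotient_of_A_if_sqrt_minus_one:
  fixes i :: "'k::field"
  assumes "i * i = -1"
  shows "F_graded_quotient_of_A TYPE('k)"
proof -
  define s :: "nat \<Rightarrow> 'k" where "s j = (if j = 1 then 1 else if j = 7 then i else 0)" for j
  define t :: "nat \<Rightarrow> 'k" where "t j = (if j = 2 then 1 else if j = 4 then i else 0)" for j
  define \<sigma> :: "bool \<Rightarrow> nat" where "\<sigma> b = (if b then 2 else 1)" for b
  have "\<forall>j. \<forall>u\<in>Poly_Mapping.keys (linear_subst s t j). length u = 1"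
    using keys_linear_subst by fastforce
  moreover have "cross7 s t n = 0" for n
    unfolding s_def t_def by (rule cross7_sqrt_minus_one_witness[OF assms])
  then have "\<forall>n\<in>{1..7}. feval (linear_subst s t) (relA n) = 0"
    by (simp add: feval_relA_linear_subst[of "linear_subst s t" s t])
  moreover have "\<forall>b. linear_subst s t (\<sigma> b) = fgen b"
    by (simp add: linear_subst_def s_def t_def \<sigma>_def fgen_def)
  then have "\<exists>p. (\<forall>w\<in>Poly_Mapping.keys p. set w \<subseteq> {1..7}) \<and> feval (linear_subst s t) p = q" for q
    using feval_onto_if_hits_generators[of "linear_subst s t" \<sigma> q] by (force simp: \<sigma>_def)
  ultimately show ?thesis
    unfolding F_graded_quotient_of_A_def graded_surj_A_to_F_def by blast
qed

lemma cauchy_schwarz_eq_imp_dependent: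
  fixes s t :: "'a \<Rightarrow> real"
  assumes "finite J"
    and eq: "(\<Sum>j\<in>J. s j * t j)\<^sup>2 = (\<Sum>j\<in>J. (s j)\<^sup>2) * (\<Sum>j\<in>J. (t j)\<^sup>2)"
  shows "\<exists>A B. (A \<noteq> 0 \<or> B \<noteq> 0) \<and> (\<forall>j\<in>J. A * s j + B * t j = 0)"
proof (cases "\<forall>j\<in>J. t j = 0")
  case True
  then show ?thesis by (intro exI[of _ 0] exI[of _ 1]) simp
next
  case False
  define S where "S = (\<Sum>j\<in>J. (s j)\<^sup>2)"
  define T where "T = (\<Sum>j\<in>J. (t j)\<^sup>2)"
  define P where "P = (\<Sum>j\<in>J. s j * t j)"
  have "T \<noteq> 0"
    using False \<open>finite J\<close> by (auto simp: T_def sum_nonneg_eq_0_iff)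
  have "(\<Sum>j\<in>J. (T * s j - P * t j)\<^sup>2)
      = (\<Sum>j\<in>J. T\<^sup>2 * (s j)\<^sup>2 - 2 * T * P * (s j * t j) + P\<^sup>2 * (t j)\<^sup>2)"
    by (rule sum.cong) (simp_all add: power2_eq_square algebra_simps)
  also have "\<dots> = T\<^sup>2 * S - 2 * T * P * P + P\<^sup>2 * T"
    by (simp add: sum.distrib sum_subtractf sum_distrib_left[symmetric] S_def T_def P_def)
  also have "\<dots> = T * (S * T - P\<^sup>2)"
    by (simp add: power2_eq_square algebra_simps)
  also have "\<dots> = 0"
    using eq by (simp add: S_def T_def P_def)
  finally have "\<forall>j\<in>J. (T * s j - P * t j)\<^sup>2 = 0"
    using \<open>finite J\<close> by (simp add: sum_nonneg_eq_0_iff)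
  then show ?thesis
    using \<open>T \<noteq> 0\<close> by (intro exI[of _ T] exI[of _ "- P"]) simp
qed

lemma not_F_graded_quotient_of_A_real: "\<not> F_graded_quotient_of_A TYPE(real)"
proof
  assume "F_graded_quotient_of_A TYPE(real)"
  then obtain \<phi> :: "nat \<Rightarrow> (bool, real) freealg" where
    deg: "\<forall>j\<in>{1..7}. \<forall>u\<in>Poly_Mapping.keys (\<phi> j). length u = 1"
    and rel: "\<forall>i\<in>{1..7}. feval \<phi> (relA i) = 0"
    and onto: "\<forall>q. \<exists>p. (\<forall>w\<in>Poly_Mapping.keys p. set w \<subseteq> {1..7}) \<and> feval \<phi> p = q"
    unfolding F_graded_quotient_of_A_def graded_surj_A_to_F_def by blast
  define s where "s j = Poly_Mapping.lookup (\<phi> j) [False]" for j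
  define t where "t j = Poly_Mapping.lookup (\<phi> j) [True]" for j
  have "\<phi> j = linear_subst s t j" if "j \<in> {1..7}" for j
    unfolding linear_subst_def s_def t_def using degree_one_eq_linear_form deg that by blast
  then have "cross7 s t i = 0" if "i \<in> {1..7}" for i
    using rel that feval_relA_linear_subst[of \<phi> s t] by (simp add: fsmul_fcomm_fgen_eq_zero_iff)
  then have "(\<Sum>j=1..7. s j * t j)\<^sup>2 = (\<Sum>j=1..7. (s j)\<^sup>2) * (\<Sum>j=1..7. (t j)\<^sup>2)"
    using sum_cross7_squares[of s t] by simp
  then obtain A B where AB: "A \<noteq> 0 \<or> B \<noteq> 0" and dep: "\<forall>j\<in>{1..7}. A * s j + B * t j = 0"
    using cauchy_schwarz_eq_imp_dependent[of "{1..7::nat}" s t] by auto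
  have image_killed: "A * Poly_Mapping.lookup q [False] + B * Poly_Mapping.lookup q [True] = 0" for q
    using onto[rule_format, of q] degree_one_functional_feval[OF deg, of A B] dep
    by (auto simp: s_def t_def)
  from image_killed[of "fgen False"] image_killed[of "fgen True"] AB show False
    by (simp add: fgen_def lookup_single)
qed

theorem proposition6p2:
  shows "((CHAR('k::field) \<noteq> 2 \<and> (\<exists>i::'k. i * i = -1)) \<longrightarrow> F_graded_quotient_of_A TYPE('k))
         \<and> \<not> F_graded_quotient_of_A TYPE(real)"
  using F_graded_quotient_of_A_if_sqrt_minus_one not_F_graded_quotient_of_A_real by blast

end
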